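(* Let $a$ be an unrestricted program constant. Let $A=p_A(\bar{ch},\bar y)$, $A_i=p_{A_i}(\bar{ch},\bar y)$, $C_i=p_{C_i}(\bar{ch},\bar y)$ ($i=1,2$) and $P=p_P(\bar{ch},\bar z)$ be atomic formulas, built from predicate symbols annotated with a (co)finite channel set $\bar{ch}$ and applied to vectors of variables, where $\bar y$ consists of trace variables. Let $\chi\equiv(A\wedge C_1\to A_2)\wedge(A\wedge C_2\to A_1)$. Then the formula $$[a]\{\mathit{true},\chi\}\mathit{true}\;\wedge\;[a]\{A_1\wedge A_2,\,C_1\wedge C_2\}P\;\to\;[a]\{A,\,C_1\wedge C_2\}P$$ is valid, i.e. true in every interpretation and state.
   Context: Setting (dLCHP). Variables and channels. $\mathcal V=\mathcal V_{\mathbb R}\cup\mathcal V_{\mathbb N}\cup\mathcal V_{\mathcal T}$ are real, integer and trace variables; $\Omega$ is the set of channel names. Traces and states. - A trace is a finite sequence of events $\langle ch,d,s\rangle$ with $ch\in\Omega$ and $d,s\in\mathbb R$. A recorded trace additionally tags each event with a trace variable. - $\epsilon$ is the empty trace; $\preceq$ is prefix and $\prec$ is strict prefix. - A state maps each variable to a value of its type. - $v\cdot\tau$ appends to each trace variable $h$ of state $v$ the subsequence of events of $\tau$ tagged with $h$. - $v\downarrow C$ projects the value of every trace variable onto the events with channel in $C$. Interpretations. An interpretation $I$ assigns relations to predicate symbols, and to the unrestricted program constant $a$ a prefix-closed set $[\![a]\!]^I$ of computations $(v,\tau,w)$ (state $v$, recorded trace $\tau$, final state $w$ or $\bot$) containing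 every $(v,\epsilon,\bot)$, with $v=w$ on trace variables. Prefix-closed means: if $(v,\tau,w)\in[\![a]\!]^I$ and $\tau'\preceq\tau$, then $(v,\tau',\bot)\in[\![a]\!]^I$. Formula semantics. - $I,v\models p(\bar{ch},\bar x)$ iff the values of $\bar x$ in $v\downarrow\bar{ch}$ lie in $I(p)$; propositional connectives are classical. - $I,v\models[a]\{A,C\}\psi$ iff for all $(v,\tau,w)\in[\![a]\!]^I$ both hold: - (commit) if $I,v\cdot\sigma\models A$ for all $\sigma\prec\tau$, then $I,v\cdot\tau\models C$; - (post) if $I,v\cdot\sigma\models A$ for all $\sigma\preceq\tau$ and $w\neq\bot$, then $I,w\cdot\tau\models\psi$. *)

theory Defs
  imports Complex_Main "HOL-Library.Sublist"
begin

datatype var = RV nat | NV nat | TV nat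

definition is_tvar :: "var \<Rightarrow> bool" where
  "is_tvar x \<longleftrightarrow> (\<exists>h. x = TV h)"

text \<open>Events over channel names of type 'c, traces, recorded traces
  (each event tagged with the index h of the trace variable TV h).\<close>
type_synonym 'c event = "'c \<times> real \<times> real"
type_synonym 'c trace = "'c event list"
type_synonym 'c rtrace = "('c event \<times> nat) list"

datatype 'c val = VReal real | VInt int | VTrace "'c trace"

type_synonym 'c state = "var \<Rightarrow> 'c val"

definition typed_state :: "'c state \<Rightarrow> bool" where
  "typed_state v \<longleftrightarrow>
     (\<forall>n. \<exists>r. v (RV n) = VReal r) \<and> (\<forall>n. \<exists>k. v (NV n) = VInt k) \<and>
     (\<forall>n. \<exists>t. v (TV n) = VTrace t)"

fun trace_of :: "'c val \<Rightarrow> 'c trace" where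
  "trace_of (VTrace t) = t"
| "trace_of _ = []"

definition state_app :: "'c state \<Rightarrow> 'c rtrace \<Rightarrow> 'c state" where
  "state_app v \<tau> = (\<lambda>x. case x of
      TV h \<Rightarrow> VTrace (trace_of (v (TV h)) @ map fst (filter (\<lambda>e. snd e = h) \<tau>))
    | _ \<Rightarrow> v x)"

definition proj :: "'c state \<Rightarrow> 'c set \<Rightarrow> 'c state" where
  "proj v C = (\<lambda>x. case x of
      TV h \<Rightarrow> VTrace (filter (\<lambda>e. fst e \<in> C) (trace_of (v (TV h))))
    | _ \<Rightarrow> v x)"

text \<open>Computations (v, \<tau>, w) with w = None standing for \<bottom>.\<close>
type_synonym 'c comp = "'c state \<times> 'c rtrace \<times> 'c state option"

record ('p, 'c) interp =
  pred :: "'p \<Rightarrow> 'c val list set"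
  prog :: "'c comp set"

definition prefix_closed :: "'c comp set \<Rightarrow> bool" where
  "prefix_closed S \<longleftrightarrow>
     (\<forall>v \<tau> w \<tau>'. (v, \<tau>, w) \<in> S \<longrightarrow> prefix \<tau>' \<tau> \<longrightarrow> (v, \<tau>', None) \<in> S)"

definition wf_interp :: "('p, 'c) interp \<Rightarrow> bool" where
  "wf_interp I \<longleftrightarrow>
     prefix_closed (prog I) \<and>
     (\<forall>v. typed_state v \<longrightarrow> (v, [], None) \<in> prog I) \<and>
     (\<forall>v \<tau> w. (v, \<tau>, w) \<in> prog I \<longrightarrow> typed_state v) \<and>
     (\<forall>v \<tau> w. (v, \<tau>, Some w) \<in> prog I \<longrightarrow>
        typed_state w \<and> (\<forall>h. w (TV h) = v (TV h)))"

definition atom_sat :: "('p, 'c) interp \<Rightarrow> 'p \<Rightarrow> 'c set \<Rightarrow> var list \<Rightarrow> 'c state \<Rightarrow> bool" where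
  "atom_sat I p C xs v \<longleftrightarrow> map (proj v C) xs \<in> pred I p"

text \<open>Semantics of [a]{A,C}\<psi> with A, C, \<psi> given by their satisfaction predicates.\<close>
definition box_sat :: "('p, 'c) interp \<Rightarrow> ('c state \<Rightarrow> bool) \<Rightarrow> ('c state \<Rightarrow> bool)
    \<Rightarrow> ('c state \<Rightarrow> bool) \<Rightarrow> 'c state \<Rightarrow> bool" where
  "box_sat I A C \<psi> v \<longleftrightarrow>
     (\<forall>\<tau> w. (v, \<tau>, w) \<in> prog I \<longrightarrow>
        ((\<forall>\<sigma>. strict_prefix \<sigma> \<tau> \<longrightarrow> A (state_app v \<sigma>)) \<longrightarrow> C (state_app v \<tau>)) \<and>
        ((\<forall>\<sigma>. prefix \<sigma> \<tau> \<longrightarrow> A (state_app v \<sigma>)) \<longrightarrow>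
           (\<forall>w'. w = Some w' \<longrightarrow> \<psi> (state_app w' \<tau>))))"

end

theory Submission
  imports Defs
begin

text \<open>Circular assume-guarantee reasoning is sound because commitments are checked on
  strictly shorter prefixes first: by induction on the length of a prefix \<sigma> of a run,
  C1 and C2 hold on all strict prefixes of \<sigma>; together with A they yield A2 and A1
  there via \<chi>, and then the guarantee of [a]{A1 \<and> A2, C1 \<and> C2}P gives C1 and C2 at \<sigma>.
  The postcondition follows once A1 \<and> A2 is known on all prefixes of the run.\<close>

lemma box_satI:
  assumes "\<And>\<tau> w. (v, \<tau>, w) \<in> prog I \<Longrightarrow> \<forall>\<sigma>. strict_prefix \<sigma> \<tau> \<longrightarrow> A (state_app v \<sigma>)
             \<Longrightarrow> C (state_app v \<tau>)"
    and "\<And>\<tau> w w'. (v, \<tau>, w) \<in> prog I \<Longrightarrow> \<forall>\<sigma>. prefix \<sigma> \<tau> \<longrightarrow> A (state_app v \<sigma>)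
             \<Longrightarrow> w = Some w' \<Longrightarrow> \<psi> (state_app w' \<tau>)"
  shows "box_sat I A C \<psi> v"
  using assms unfolding box_sat_def by blast

lemma box_sat_commitD:
  assumes "box_sat I A C \<psi> v" "(v, \<tau>, w) \<in> prog I"
    and "\<forall>\<sigma>. strict_prefix \<sigma> \<tau> \<longrightarrow> A (state_app v \<sigma>)"
  shows "C (state_app v \<tau>)"
  using assms unfolding box_sat_def by blast

lemma box_sat_postD:
  assumes "box_sat I A C \<psi> v" "(v, \<tau>, Some w') \<in> prog I"
    and "\<forall>\<sigma>. prefix \<sigma> \<tau> \<longrightarrow> A (state_app v \<sigma>)"
  shows "\<psi> (state_app w' \<tau>)"
  using assms unfolding box_sat_def by blast

lemma prefix_closedD:
  assumes "prefix_closed S" "(v, \<tau>, w) \<in> S" "prefix \<sigma> \<tau>"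
  shows "(v, \<sigma>, None) \<in> S"
  using assms unfolding prefix_closed_def by blast

lemma assume_guarantee_commit:
  assumes pc: "prefix_closed (prog I)"
    and chi: "box_sat I (\<lambda>_. True) (\<lambda>u. (A u \<and> C1 u \<longrightarrow> A2 u) \<and> (A u \<and> C2 u \<longrightarrow> A1 u))
                (\<lambda>_. True) v"
    and guar: "box_sat I (\<lambda>u. A1 u \<and> A2 u) (\<lambda>u. C1 u \<and> C2 u) P v"
    and run: "(v, \<tau>, w) \<in> prog I"
    and A: "\<forall>\<rho>. strict_prefix \<rho> \<tau> \<longrightarrow> A (state_app v \<rho>)"
    and "prefix \<sigma> \<tau>"
  shows "C1 (state_app v \<sigma>) \<and> C2 (state_app v \<sigma>)"
  using \<open>prefix \<sigma> \<tau>\<close>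
proof (induction \<sigma> rule: measure_induct_rule[where f = length])
  case (less \<sigma>)
  have "A1 (state_app v \<rho>) \<and> A2 (state_app v \<rho>)" if "strict_prefix \<rho> \<sigma>" for \<rho>
  proof -
    have "strict_prefix \<rho> \<tau>"
      using that less.prems by (meson prefix_order.less_le_trans)
    then have "prefix \<rho> \<tau>" and "A (state_app v \<rho>)"
      using A by (auto simp: strict_prefix_def)
    moreover have "C1 (state_app v \<rho>) \<and> C2 (state_app v \<rho>)"
      using less.IH \<open>prefix \<rho> \<tau>\<close> prefix_length_less[OF that] by blast
    moreover have "(v, \<rho>, None) \<in> prog I"
      using prefix_closedD[OF pc run \<open>prefix \<rho> \<tau>\<close>] .
    ultimately show ?thesis
      using box_sat_commitD[OF chi] by blast
  qed
  moreover have "(v, \<sigma>, None) \<in> prog I"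
    using prefix_closedD[OF pc run less.prems] .
  ultimately show ?case
    using box_sat_commitD[OF guar] by blast
qed

lemma box_sat_assume_guarantee:
  assumes pc: "prefix_closed (prog I)"
    and chi: "box_sat I (\<lambda>_. True) (\<lambda>u. (A u \<and> C1 u \<longrightarrow> A2 u) \<and> (A u \<and> C2 u \<longrightarrow> A1 u))
                (\<lambda>_. True) v"
    and guar: "box_sat I (\<lambda>u. A1 u \<and> A2 u) (\<lambda>u. C1 u \<and> C2 u) P v"
  shows "box_sat I A (\<lambda>u. C1 u \<and> C2 u) P v"
proof (rule box_satI)
  fix \<tau> w
  assume "(v, \<tau>, w) \<in> prog I" "\<forall>\<sigma>. strict_prefix \<sigma> \<tau> \<longrightarrow> A (state_app v \<sigma>)"
  then show "C1 (state_app v \<tau>) \<and> C2 (state_app v \<tau>)"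
    using assume_guarantee_commit[OF pc chi guar] by blast
next
  fix \<tau> w w'
  assume run: "(v, \<tau>, w) \<in> prog I" and A: "\<forall>\<sigma>. prefix \<sigma> \<tau> \<longrightarrow> A (state_app v \<sigma>)"
    and "w = Some w'"
  have "C1 (state_app v \<sigma>) \<and> C2 (state_app v \<sigma>)" if "prefix \<sigma> \<tau>" for \<sigma>
    using assume_guarantee_commit[OF pc chi guar run _ that] A
    by (simp add: strict_prefix_def)
  then have "\<forall>\<sigma>. prefix \<sigma> \<tau> \<longrightarrow> A1 (state_app v \<sigma>) \<and> A2 (state_app v \<sigma>)"
    using A box_sat_commitD[OF chi] prefix_closedD[OF pc run] by blast
  then show "P (state_app w' \<tau>)"
    using box_sat_postD[OF guar] run \<open>w = Some w'\<close> by blast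
qed

theorem theorem3:
  fixes I :: "('p, 'c) interp" and v :: "'c state" and ch :: "'c set"
    and ys zs :: "var list" and pA pA1 pA2 pC1 pC2 pP :: 'p
  assumes "finite ch \<or> finite (- ch)"
    and "\<forall>y\<in>set ys. is_tvar y"
    and "wf_interp I"
    and "typed_state v"
  shows "let A = atom_sat I pA ch ys; A1 = atom_sat I pA1 ch ys; A2 = atom_sat I pA2 ch ys;
             C1 = atom_sat I pC1 ch ys; C2 = atom_sat I pC2 ch ys; P = atom_sat I pP ch zs;
             \<chi> = (\<lambda>u. (A u \<and> C1 u \<longrightarrow> A2 u) \<and> (A u \<and> C2 u \<longrightarrow> A1 u))
         in box_sat I (\<lambda>_. True) \<chi> (\<lambda>_. True) v \<and>
            box_sat I (\<lambda>u. A1 u \<and> A2 u) (\<lambda>u. C1 u \<and> C2 u) P v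
            \<longrightarrow> box_sat I A (\<lambda>u. C1 u \<and> C2 u) P v"
  using box_sat_assume_guarantee \<open>wf_interp I\<close> unfolding wf_interp_def Let_def by blast

end
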